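(* Let $\mathcal{M}$ be a Riemannian submanifold of a Euclidean space $\mathcal{E}$ (with induced norm $\|\cdot\|_{\mathcal{M}}$) and let $f:\mathcal{M}\times\mathbb{R}^n\to\mathbb{R}$ be differentiable. Let $\operatorname{Retr}_{\mathcal{M}}$ be a retraction on $\mathcal{M}$ and assume: (i) there is $L_y\ge0$ with $\|\nabla_yf(\boldsymbol{x},\boldsymbol{y}^1)-\nabla_yf(\boldsymbol{x},\boldsymbol{y}^2)\|\le L_y\|\boldsymbol{y}^1-\boldsymbol{y}^2\|$ for all $\boldsymbol{x}\in\mathcal{M}$, $\boldsymbol{y}^1,\boldsymbol{y}^2\in\mathbb{R}^n$; (ii) there is $L_x\ge1$ such that for all $\boldsymbol{y}$, $f(\cdot,\boldsymbol{y})$ has a gradient Lipschitz retraction with constant $L_x$ with respect to $\operatorname{Retr}_{\mathcal{M}}$, i.e. $f(\operatorname{Retr}_{\mathcal{M}}(\boldsymbol{x},\boldsymbol{v}),\boldsymbol{y})\le f(\boldsymbol{x},\boldsymbol{y})+\langle\operatorname{grad}_xf(\boldsymbol{x},\boldsymbol{y}),\boldsymbol{v}\rangle_{\boldsymbol{x}}+\frac{L_x}{2}\|\boldsymbol{v}\|_{\boldsymbol{x}}^2$ for all $\boldsymbol{x}\in\mathcal{M}$, $\boldsymbol{v}\in T_{\boldsymbol{x}}\mathcal{M}$; (iii) there is $L_{xy}\ge0$ with $\|\nabla_yf(\boldsymbol{x}^1,\boldsymbol{y})-\nabla_yf(\boldsymbol{x}^2,\boldsymbol{y})\|\le L_{xy}\|\boldsymbol{x}^1-\boldsymbol{x}^2\|_{\mathcal{M}}$;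 (iv) the injectivity radius of $\mathcal{M}$ is strictly positive and there is $L_1>0$ with $\|\operatorname{Retr}_{\mathcal{M}}(\boldsymbol{x},\boldsymbol{v})-\boldsymbol{x}\|_{\mathcal{M}}\le L_1\|\boldsymbol{v}\|_{\boldsymbol{x}}$ for all $\boldsymbol{x}\in\mathcal{M}$, $\boldsymbol{v}\in T_{\boldsymbol{x}}\mathcal{M}$. Define $\bar f:\mathcal{M}'=\mathcal{M}\times\mathbb{R}^n\to\mathbb{R}$ by $\bar f(\boldsymbol{x},\boldsymbol{y})=f(\boldsymbol{x},\boldsymbol{y})$ and the retraction $\operatorname{Retr}_{\mathcal{M}'}((\boldsymbol{x},\boldsymbol{y}),(\eta_x,\eta_y))=(\operatorname{Retr}_{\mathcal{M}}(\boldsymbol{x},\eta_x),\boldsymbol{y}+\eta_y)$. Then $\bar f$ has a gradient Lipschitz retraction with respect to $\operatorname{Retr}_{\mathcal{M}'}$ with constant $L_R=L_{xy}L_1+\max(L_x,L_y)$, i.e. for all $\boldsymbol{z}\in\mathcal{M}'$ and $\eta\in T_{\boldsymbol{z}}\mathcal{M}'$, $$\bar f(\operatorname{Retr}_{\mathcal{M}'}(\boldsymbol{z},\eta))\le\bar f(\boldsymbol{z})+\langle\operatorname{grad}\bar f(\boldsymbol{z}),\eta\rangle_{\boldsymbol{z}}+\frac{L_R}{2}\|\eta\|_{\boldsymbol{z}}^2.$$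
   Context: $\operatorname{grad}$ denotes the Riemannian gradient, $\nabla_y$ the Euclidean gradient in $\boldsymbol{y}$; $\mathcal{M}'$ carries the product metric $\langle(\eta_x,\eta_y),(\xi_x,\xi_y)\rangle_{\boldsymbol{z}}=\langle\eta_x,\xi_x\rangle_{\boldsymbol{x}}+\eta_y^\top\xi_y$. A retraction is a smooth map $\operatorname{Retr}:T\mathcal{M}\to\mathcal{M}$ with $\operatorname{Retr}(\boldsymbol{x},\boldsymbol{0})=\boldsymbol{x}$ and $D\operatorname{Retr}(\boldsymbol{x},\cdot)(\boldsymbol{0})=\mathrm{id}$. *)

theory Defs
  imports "HOL-Analysis.Analysis"
begin

fun Ck_on :: "nat \<Rightarrow> 'a::euclidean_space set \<Rightarrow> ('a \<Rightarrow> 'b::euclidean_space) \<Rightarrow> bool" where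
  "Ck_on 0 U f = continuous_on U f"
| "Ck_on (Suc k) U f =
     ((\<forall>x\<in>U. f differentiable (at x)) \<and>
      (\<forall>v. Ck_on k U (\<lambda>x. frechet_derivative f (at x) v)))"

definition smooth_on :: "'a::euclidean_space set \<Rightarrow> ('a \<Rightarrow> 'b::euclidean_space) \<Rightarrow> bool" where
  "smooth_on U f \<longleftrightarrow> (\<forall>k. Ck_on k U f)"

definition smooth_map_on :: "'a::euclidean_space set \<Rightarrow> ('a \<Rightarrow> 'b::euclidean_space) \<Rightarrow> bool" where
  "smooth_map_on S F \<longleftrightarrow>
     (\<forall>p\<in>S. \<exists>U G. open U \<and> p \<in> U \<and> smooth_on U G \<and> (\<forall>q\<in>S \<inter> U. G q = F q))"

definition differentiable_on_set :: "'a::euclidean_space set \<Rightarrow> ('a \<Rightarrow> real) \<Rightarrow> bool" where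
  "differentiable_on_set S g \<longleftrightarrow>
     (\<forall>p\<in>S. \<exists>U G. open U \<and> p \<in> U \<and> (\<forall>q\<in>U. G differentiable (at q)) \<and> (\<forall>q\<in>S \<inter> U. G q = g q))"

definition embedded_submanifold :: "'a::euclidean_space set \<Rightarrow> bool" where
  "embedded_submanifold M \<longleftrightarrow>
     (\<forall>x\<in>M. \<exists>U (h::'a \<Rightarrow> 'a) k. open U \<and> x \<in> U \<and> smooth_on U h \<and>
        (\<forall>p\<in>U. dim (range (frechet_derivative h (at p))) = k) \<and>
        M \<inter> U = {p\<in>U. h p = 0})"

definition curve_through :: "'a::euclidean_space set \<Rightarrow> 'a \<Rightarrow> 'a \<Rightarrow> (real \<Rightarrow> 'a) \<Rightarrow> bool" where
  "curve_through M x v \<gamma> \<longleftrightarrow>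
     \<gamma> 0 = x \<and> (\<exists>e>0. \<forall>t. \<bar>t\<bar> < e \<longrightarrow> \<gamma> t \<in> M) \<and> (\<gamma> has_vector_derivative v) (at 0)"

definition tangent_space :: "'a::euclidean_space set \<Rightarrow> 'a \<Rightarrow> 'a set" where
  "tangent_space M x = {v. \<exists>\<gamma>. curve_through M x v \<gamma>}"

definition riem_grad :: "'a::euclidean_space set \<Rightarrow> ('a \<Rightarrow> real) \<Rightarrow> 'a \<Rightarrow> 'a" where
  "riem_grad M g x = (THE u. u \<in> tangent_space M x \<and>
     (\<forall>\<gamma> v. curve_through M x v \<gamma> \<longrightarrow> ((g \<circ> \<gamma>) has_real_derivative (u \<bullet> v)) (at 0)))"

definition egrad :: "('a::euclidean_space \<Rightarrow> real) \<Rightarrow> 'a \<Rightarrow> 'a" where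
  "egrad g y = (THE u. (g has_derivative (\<lambda>h. u \<bullet> h)) (at y))"

definition retraction :: "'a::euclidean_space set \<Rightarrow> ('a \<Rightarrow> 'a \<Rightarrow> 'a) \<Rightarrow> bool" where
  "retraction M R \<longleftrightarrow>
     (\<forall>x\<in>M. \<forall>v\<in>tangent_space M x. R x v \<in> M) \<and>
     smooth_map_on {(x, v). x \<in> M \<and> v \<in> tangent_space M x} (\<lambda>(x, v). R x v) \<and>
     (\<forall>x\<in>M. R x 0 = x) \<and>
     (\<forall>x\<in>M. \<forall>v\<in>tangent_space M x. ((\<lambda>t. R x (t *\<^sub>R v)) has_vector_derivative v) (at 0))"

definition grad_lipschitz_retraction ::
  "'a::euclidean_space set \<Rightarrow> ('a \<Rightarrow> real) \<Rightarrow> ('a \<Rightarrow> 'a \<Rightarrow> 'a) \<Rightarrow> real \<Rightarrow> bool" where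
  "grad_lipschitz_retraction M g R L \<longleftrightarrow>
     (\<forall>x\<in>M. \<forall>v\<in>tangent_space M x.
        g (R x v) \<le> g x + riem_grad M g x \<bullet> v + L / 2 * (norm v)\<^sup>2)"

definition geodesic_from :: "'a::euclidean_space set \<Rightarrow> 'a \<Rightarrow> 'a \<Rightarrow> (real \<Rightarrow> 'a) \<Rightarrow> bool" where
  "geodesic_from M x v \<gamma> \<longleftrightarrow>
     \<gamma> 0 = x \<and> (\<forall>t\<in>{0..1}. \<gamma> t \<in> M) \<and>
     (\<exists>\<gamma>' \<gamma>''. \<gamma>' 0 = v \<and>
        (\<forall>t\<in>{0..1}. (\<gamma> has_vector_derivative \<gamma>' t) (at t within {0..1}) \<and>
                     (\<gamma>' has_vector_derivative \<gamma>'' t) (at t within {0..1}) \<and>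
                     (\<forall>w\<in>tangent_space M (\<gamma> t). \<gamma>'' t \<bullet> w = 0)))"

definition exp_map :: "'a::euclidean_space set \<Rightarrow> 'a \<Rightarrow> 'a \<Rightarrow> 'a" where
  "exp_map M x v = (THE p. \<exists>\<gamma>. geodesic_from M x v \<gamma> \<and> p = \<gamma> 1)"

definition inj_radius_at :: "'a::euclidean_space set \<Rightarrow> 'a \<Rightarrow> ereal" where
  "inj_radius_at M x = Sup (ereal ` {r. r \<ge> 0 \<and>
     (\<forall>v\<in>tangent_space M x \<inter> ball 0 r. \<exists>\<gamma>. geodesic_from M x v \<gamma>) \<and>
     inj_on (exp_map M x) (tangent_space M x \<inter> ball 0 r) \<and>
     (\<forall>v\<in>tangent_space M x \<inter> ball 0 r. \<exists>D. linear D \<and>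
        (exp_map M x has_derivative D) (at v within tangent_space M x) \<and>
        inj_on D (tangent_space M x))})"

definition inj_radius :: "'a::euclidean_space set \<Rightarrow> ereal" where
  "inj_radius M = (INF x\<in>M. inj_radius_at M x)"

definition prod_retr :: "('a \<Rightarrow> 'a \<Rightarrow> 'a) \<Rightarrow> ('a \<times> 'b::real_vector) \<Rightarrow> ('a \<times> 'b) \<Rightarrow> ('a \<times> 'b)" where
  "prod_retr R z \<eta> = (R (fst z) (fst \<eta>), snd z + snd \<eta>)"

end

theory Submission
  imports Defs
begin

text \<open>The retraction on M \<times> UNIV moves the two components independently, so the increment of f
  splits into a step in x at fixed y, bounded by (ii), and a step in y from the new point
  x' = R x \<eta>_x, bounded by the descent lemma for the L_y-Lipschitz gradient (i). The latter step
  starts from the y-gradient at x' rather than at x; by (iii) and (iv) the two differ by at most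
  L_xy L_1 |\<eta>_x|, and the cross term L_xy L_1 |\<eta>_x| |\<eta>_y| is absorbed by 2ab \<le> a^2 + b^2.

  The splitting of the gradient of f on M \<times> UNIV into (Riemannian x-gradient, Euclidean
  y-gradient) needs the tangent spaces of M to be linear. Near x, M is the zero set of a map h of
  constant rank; the inverse function theorem, applied to the chart p \<mapsto> P (p - x) + adjoint (Dh x) (h p)
  with P the orthogonal projection onto ker (Dh x), yields curves in M with any prescribed
  velocity in ker (Dh x), so the tangent space is that kernel.\<close>

lemma orthogonal_projection_exists:
  fixes K :: "'a::euclidean_space set"
  assumes "subspace K"
  obtains P where "linear P" "\<And>v. P v \<in> K" "\<And>v. v \<in> K \<Longrightarrow> P v = v"
proof -
  obtain B where B: "B \<subseteq> K" "pairwise orthogonal B" "span B = K"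
    using orthogonal_basis_subspace[OF assms] by metis
  define P where "P v = (\<Sum>b\<in>B. (b \<bullet> v / (b \<bullet> b)) *\<^sub>R b)" for v
  have "linear P"
    by (rule linearI) (simp_all add: P_def inner_add_right add_divide_distrib scaleR_add_left
        sum.distrib scaleR_sum_right)
  moreover have PK: "P v \<in> K" for v
    unfolding P_def B(3)[symmetric] by (intro span_sum span_scale span_base)
  moreover have "P v = v" if "v \<in> K" for v
  proof -
    have "v - P v \<in> span B" using subspace_diff[OF assms that PK] B(3) by simp
    then have "orthogonal (v - P v) (v - P v)"
      using Gram_Schmidt_step[OF B(2), of "v - P v" v] by (simp add: P_def)
    then show ?thesis by (simp add: orthogonal_def)
  qed
  ultimately show ?thesis using that by blast
qed

lemma linear_inj_on_if_dim_le_dim_image: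
  fixes f :: "'a::euclidean_space \<Rightarrow> 'b::euclidean_space"
  assumes "linear f" "subspace S" "dim S \<le> dim (f ` S)"
  shows "inj_on f S"
proof -
  obtain B where B: "B \<subseteq> S" "independent B" "S \<subseteq> span B" "card B = dim S"
    using basis_exists[of S] by blast
  have fin: "finite B" using B(2) finiteI_independent by blast
  have sp: "f ` S \<subseteq> span (f ` B)"
    using B(3) assms(1) by (metis image_mono span_linear_image)
  have "dim (f ` S) \<le> card (f ` B)"
    using span_card_ge_dim[of "f ` B" "f ` S"] B(1) sp fin by blast
  moreover have "card (f ` B) \<le> card B" using fin card_image_le by blast
  ultimately have c: "card (f ` B) = card B" "card (f ` B) = dim (f ` S)"
    using assms(3) B(4) by linarith+
  have "independent (f ` B)"
    using card_eq_dim[of "f ` B" "f ` S"] B(1) c(2) sp fin by blast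
  then have "inj_on f (span B)"
    using linear_inj_on_span_iff_independent_image[OF assms(1)] eq_card_imp_inj_on[OF fin c(1)]
    by blast
  then show ?thesis using B(3) inj_on_subset by blast
qed

lemma adjoint_eq_zero_if_in_kernel:
  fixes A :: "'a::euclidean_space \<Rightarrow> 'b::euclidean_space"
  assumes "linear A" "A (adjoint A y) = 0"
  shows "adjoint A y = 0"
  using adjoint_works[OF assms(1), of "adjoint A y" y] assms(2) by simp

lemma inj_on_adjoint_range:
  fixes A :: "'a::euclidean_space \<Rightarrow> 'b::euclidean_space"
  assumes "linear A"
  shows "inj_on (adjoint A) (range A)"
proof (rule inj_onI)
  fix a b assume "a \<in> range A" "b \<in> range A" and eq: "adjoint A a = adjoint A b"
  then obtain za zb where ab: "a = A za" "b = A zb" by blast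
  have "adjoint A (adjoint (adjoint A) (za - zb)) = 0"
    using eq ab linear_diff[OF assms] linear_diff[OF adjoint_linear[OF assms]]
    by (simp add: adjoint_adjoint[OF assms])
  then have "adjoint (adjoint A) (za - zb) = 0"
    by (rule adjoint_eq_zero_if_in_kernel[OF adjoint_linear[OF assms]])
  then show "a = b" using ab linear_diff[OF assms] by (simp add: adjoint_adjoint[OF assms])
qed

text \<open>Used with A = Dh x, C = Dh p and w \<mapsto> P w + adjoint A (C w) the derivative at p of the
  chart built in constant_rank_local_inverse: the inverse chart maps ker (Dh x) into ker (Dh p).
  Ontoness gives range (adjoint A) \<subseteq> adjoint A ` range C, and then equal ranks make adjoint A
  injective on range C.\<close>
lemma constant_rank_kernel_transfer:
  fixes A C :: "'a::euclidean_space \<Rightarrow> 'b::euclidean_space"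
  assumes lA: "linear A" and lC: "linear C"
    and PA: "\<And>v. A (P v) = 0"
    and onto: "surj (\<lambda>w. P w + adjoint A (C w))"
    and rank: "dim (range C) = dim (range A)"
    and w: "A (P w + adjoint A (C w)) = 0"
  shows "C w = 0"
proof -
  let ?A' = "adjoint A"
  have lA': "linear ?A'" using adjoint_linear[OF lA] .
  have ker_orth_range: "v \<bullet> ?A' y = 0" if "A v = 0" for v y
    using adjoint_works[OF lA, of v y] that by simp
  have "A (?A' (C w)) = 0" using w PA lA by (simp add: linear_add)
  then have A'Cw: "?A' (C w) = 0" by (rule adjoint_eq_zero_if_in_kernel[OF lA])
  have "range ?A' \<subseteq> ?A' ` range C"
  proof
    fix u assume "u \<in> range ?A'"
    then obtain z where z: "u = ?A' z" by blast
    obtain w' where w': "?A' z = P w' + ?A' (C w')" using surjD[OF onto] by metis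
    then have "P w' = ?A' (z - C w')" using lA' by (simp add: linear_diff algebra_simps)
    then have "P w' \<bullet> P w' = 0" using ker_orth_range[OF PA[of w']] by simp
    then show "u \<in> ?A' ` range C" using w' z by simp
  qed
  have "dim (range A) \<le> dim (?A' ` range C)"
  proof -
    have "inj_on ?A' (span (range A))"
      using inj_on_adjoint_range[OF lA] by (simp add: span_linear_image[OF lA])
    then have "dim (range A) = dim (?A' ` range A)" by (simp add: dim_image_eq[OF lA'])
    also have "\<dots> \<le> dim (?A' ` range C)"
      using \<open>range ?A' \<subseteq> ?A' ` range C\<close> by (intro dim_subset) blast
    finally show ?thesis .
  qed
  then have "inj_on ?A' (range C)"
    using linear_inj_on_if_dim_le_dim_image[OF lA'] lC rank
    by (simp add: subspace_UNIV linear_subspace_image)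
  then show "C w = 0"
    using A'Cw linear_0[OF lC] linear_0[OF lA'] by (metis inj_onD rangeI)
qed

lemma curve_stays_in_open:
  fixes \<gamma> :: "real \<Rightarrow> 'a::real_normed_vector"
  assumes "(\<gamma> has_vector_derivative v) (at 0)" "open U" "\<gamma> 0 \<in> U"
  obtains d where "d > 0" "\<And>t. \<bar>t\<bar> < d \<Longrightarrow> \<gamma> t \<in> U"
proof -
  obtain e where e: "e > 0" "ball (\<gamma> 0) e \<subseteq> U"
    using assms(2,3) open_contains_ball by blast
  obtain d where d: "d > 0" "\<And>t. dist t 0 < d \<Longrightarrow> dist (\<gamma> t) (\<gamma> 0) < e"
    using has_vector_derivative_continuous[OF assms(1)] e(1) unfolding continuous_at_eps_delta by blast
  show ?thesis
  proof (rule that[OF d(1)])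
    fix t :: real assume "\<bar>t\<bar> < d"
    then show "\<gamma> t \<in> U" using d(2)[of t] e(2) by (auto simp: dist_commute)
  qed
qed

lemma tangent_vector_in_kernel:
  fixes h :: "'a::euclidean_space \<Rightarrow> 'b::euclidean_space"
  assumes U: "open U" "x \<in> U" and MU: "M \<inter> U = {p\<in>U. h p = 0}"
    and dh: "(h has_derivative A) (at x)"
    and v: "v \<in> tangent_space M x"
  shows "A v = 0"
proof -
  obtain \<gamma> e where \<gamma>: "\<gamma> 0 = x" "e > 0" "\<And>t. \<bar>t\<bar> < e \<Longrightarrow> \<gamma> t \<in> M"
      "(\<gamma> has_vector_derivative v) (at 0)"
    using v unfolding tangent_space_def curve_through_def by blast
  obtain d where d: "d > 0" "\<And>t. \<bar>t\<bar> < d \<Longrightarrow> \<gamma> t \<in> U"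
    using curve_stays_in_open[OF \<gamma>(4) U(1)] \<gamma>(1) U(2) by metis
  have "((\<lambda>t. h (\<gamma> t)) has_derivative (\<lambda>s. A (s *\<^sub>R v))) (at 0)"
    using diff_chain_at[OF \<gamma>(4)[unfolded has_vector_derivative_def], of h A] dh \<gamma>(1)
    by (simp add: o_def)
  then have "((\<lambda>t. 0::'b) has_derivative (\<lambda>s. A (s *\<^sub>R v))) (at 0)"
  proof (rule has_derivative_transform_within_open[where s="ball 0 (min d e)"])
    fix t :: real assume "t \<in> ball 0 (min d e)"
    then show "h (\<gamma> t) = 0" using d(2)[of t] \<gamma>(3)[of t] MU by auto
  qed (use d \<gamma> in auto)
  then have "(\<lambda>s. A (s *\<^sub>R v)) = (\<lambda>s. 0)"
    using has_derivative_unique has_derivative_const by blast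
  then show ?thesis by (metis scale_one)
qed

lemma inverse_function_theorem_linear:
  fixes \<phi> :: "'a::euclidean_space \<Rightarrow> 'a"
  assumes U: "open U" "x \<in> U"
    and der: "\<And>p. p \<in> U \<Longrightarrow> (\<phi> has_derivative J p) (at p)"
    and cont: "\<And>v. continuous_on U (\<lambda>p. J p v)"
    and inj: "inj (J x)"
  obtains V g g' where "open V" "\<phi> x \<in> V" "g (\<phi> x) = x" "\<And>q. q \<in> V \<Longrightarrow> g q \<in> U"
    "\<And>q. q \<in> V \<Longrightarrow> (g has_derivative g' q) (at q)"
    "\<And>q. q \<in> V \<Longrightarrow> bij (J (g q)) \<and> g' q = inv (J (g q))"
proof -
  have lJ: "linear (J p)" if "p \<in> U" for p using has_derivative_linear[OF der[OF that]] .
  define J' where "J' p = Blinfun (J p)" for p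
  have J': "blinfun_apply (J' p) = J p" if "p \<in> U" for p
    unfolding J'_def using lJ[OF that]
    by (simp add: bounded_linear_Blinfun_apply linear_conv_bounded_linear)
  have derJ': "(\<phi> has_derivative blinfun_apply (J' p)) (at p)" if "p \<in> U" for p
    using der[OF that] J'[OF that] by simp
  have contJ': "continuous_on U J'"
  proof (rule continuous_on_blinfun_componentwise)
    show "continuous_on U (\<lambda>p. blinfun_apply (J' p) i)" for i
      using cont[of i] by (rule continuous_on_cong[THEN iffD1, rotated 2]) (use J' in auto)
  qed
  obtain Ji where lJi: "linear Ji" and Ji: "\<And>w. Ji (J x w) = w"
    using linear_surjective_isomorphism[OF lJ[OF U(2)] linear_inj_imp_surj[OF lJ[OF U(2)] inj]]
    by auto
  have "blinfun_apply (Blinfun Ji) = Ji"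
    using lJi by (simp add: bounded_linear_Blinfun_apply linear_conv_bounded_linear)
  then have invf: "Blinfun Ji o\<^sub>L J' x = id_blinfun"
    by (intro blinfun_eqI) (simp add: J'[OF U(2)] Ji)
  then obtain U' V g g' where U': "U' \<subseteq> U" "x \<in> U'" and V: "open V" "\<phi> x \<in> V"
    and hom: "homeomorphism U' V \<phi> g"
    and dg: "\<And>q. q \<in> V \<Longrightarrow> (g has_derivative g' q) (at q)"
    and g': "\<And>q. q \<in> V \<Longrightarrow> g' q = inv (blinfun_apply (J' (g q)))"
    and bij: "\<And>q. q \<in> V \<Longrightarrow> bij (blinfun_apply (J' (g q)))"
    using inverse_function_theorem[OF U(1) derJ' contJ' U(2) invf] by metis
  have gV: "g q \<in> U" if "q \<in> V" for q
    using hom U'(1) that unfolding homeomorphism_def by blast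
  have "g (\<phi> x) = x" using hom U'(2) unfolding homeomorphism_def by blast
  moreover have "bij (J (g q)) \<and> g' q = inv (J (g q))" if "q \<in> V" for q
    using g'[OF that] bij[OF that] J'[OF gV[OF that]] by simp
  ultimately show ?thesis using that[OF V] gV dg by blast
qed

lemma inj_kernel_projection_plus_adjoint:
  fixes A :: "'a::euclidean_space \<Rightarrow> 'b::euclidean_space"
  assumes lA: "linear A" and PA: "\<And>w. A (P w) = 0" and P_id: "\<And>w. A w = 0 \<Longrightarrow> P w = w"
    and lP: "linear P"
  shows "inj (\<lambda>w. P w + adjoint A (A w))"
proof -
  let ?A' = "adjoint A"
  have "w = 0" if "P w + ?A' (A w) = 0" for w
  proof -
    have "P w = - ?A' (A w)" using that by (simp add: eq_neg_iff_add_eq_0)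
    also have "\<dots> = ?A' (- A w)" using linear_neg[OF adjoint_linear[OF lA]] by simp
    finally have "P w = ?A' (- A w)" .
    moreover have "P w \<bullet> ?A' (- A w) = 0" using adjoint_works[OF lA, of "P w" "- A w"] PA by simp
    ultimately have "P w \<bullet> P w = 0" by simp
    then have Pw: "P w = 0" by simp
    then have "?A' (A w) = 0" using that by simp
    then have "A w \<bullet> A w = 0" using adjoint_works[OF lA, of w "A w"] by simp
    then show "w = 0" using P_id Pw by simp
  qed
  moreover have "linear (\<lambda>w. P w + ?A' (A w))"
    using linear_compose_add[OF lP linear_compose[OF lA adjoint_linear[OF lA]]] by (simp add: o_def)
  ultimately show ?thesis using linear_injective_0 by blast
qed

lemma chart_has_derivative:
  assumes "bounded_linear P" "bounded_linear B" "(h has_derivative Dh) (at p)"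
  shows "((\<lambda>p. P (p - x) + B (h p)) has_derivative (\<lambda>w. P w + B (Dh w))) (at p)"
proof -
  have "((\<lambda>p. P (p - x)) has_derivative P) (at p)"
    using bounded_linear.has_derivative[OF assms(1)
        has_derivative_diff[OF has_derivative_ident has_derivative_const]]
    by simp
  then show ?thesis
    using bounded_linear.has_derivative[OF assms(2,3)] by (rule has_derivative_add)
qed

lemma constant_rank_local_inverse:
  fixes h :: "'a::euclidean_space \<Rightarrow> 'b::euclidean_space"
  assumes U: "open U" "x \<in> U" and hx: "h x = 0"
    and dh: "\<And>p. p \<in> U \<Longrightarrow> (h has_derivative Dh p) (at p)"
    and cont: "\<And>v. continuous_on U (\<lambda>p. Dh p v)"
    and rank: "\<And>p. p \<in> U \<Longrightarrow> dim (range (Dh p)) = k"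
  obtains V g g' where "open V" "0 \<in> V" "g 0 = x" "\<And>q. q \<in> V \<Longrightarrow> g q \<in> U"
    "\<And>q. q \<in> V \<Longrightarrow> (g has_derivative g' q) (at q)"
    "\<And>q v. q \<in> V \<Longrightarrow> Dh x v = 0 \<Longrightarrow> Dh (g q) (g' q v) = 0"
    "\<And>v. Dh x v = 0 \<Longrightarrow> g' 0 v = v"
proof -
  define A where "A = Dh x"
  have lD: "linear (Dh p)" if "p \<in> U" for p using has_derivative_linear[OF dh[OF that]] .
  have lA: "linear A" unfolding A_def using lD[OF U(2)] .
  have lA': "bounded_linear (adjoint A)"
    using adjoint_linear[OF lA] by (simp add: linear_conv_bounded_linear)
  obtain P where lP: "linear P" and PA: "\<And>w. A (P w) = 0" and P_id: "\<And>w. A w = 0 \<Longrightarrow> P w = w"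
    using orthogonal_projection_exists[of "{w. A w = 0}"] linear_subspace_kernel[OF lA] by auto
  define J where "J p w = P w + adjoint A (Dh p w)" for p w
  define \<phi> where "\<phi> p = P (p - x) + adjoint A (h p)" for p
  have der\<phi>: "(\<phi> has_derivative J p) (at p)" if "p \<in> U" for p
    unfolding \<phi>_def J_def[abs_def]
    by (rule chart_has_derivative[OF lP[unfolded linear_conv_bounded_linear] lA' dh[OF that]])
  have contJ: "continuous_on U (\<lambda>p. J p v)" for v
    unfolding J_def
    by (intro continuous_on_add continuous_on_const bounded_linear.continuous_on[OF lA'] cont)
  have "inj (J x)"
    using inj_kernel_projection_plus_adjoint[OF lA PA P_id lP] unfolding J_def A_def .
  then obtain V g g' where V: "open V" "\<phi> x \<in> V" and gx: "g (\<phi> x) = x"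
    and gU: "\<And>q. q \<in> V \<Longrightarrow> g q \<in> U" and dg: "\<And>q. q \<in> V \<Longrightarrow> (g has_derivative g' q) (at q)"
    and g': "\<And>q. q \<in> V \<Longrightarrow> bij (J (g q)) \<and> g' q = inv (J (g q))"
    using inverse_function_theorem_linear[OF U der\<phi> contJ] by blast
  have \<phi>x: "\<phi> x = 0"
    using hx linear_0[OF lP] linear_0[OF adjoint_linear[OF lA]] by (simp add: \<phi>_def)
  have ker: "Dh (g q) (g' q v) = 0" if q: "q \<in> V" and v: "Dh x v = 0" for q v
  proof -
    have pU: "g q \<in> U" using gU[OF q] .
    have "J (g q) (g' q v) = v"
      using g'[OF q] by (simp add: bij_is_surj surj_f_inv_f)
    then have "A (P (g' q v) + adjoint A (Dh (g q) (g' q v))) = 0" using v by (simp add: J_def A_def)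
    moreover have "surj (\<lambda>w. P w + adjoint A (Dh (g q) w))"
      using bij_is_surj g'[OF q] unfolding J_def by blast
    ultimately show ?thesis
      using constant_rank_kernel_transfer[OF lA lD[OF pU] PA] rank[OF pU] rank[OF U(2)]
      by (simp add: A_def)
  qed
  have g'0: "g' 0 v = v" if v: "Dh x v = 0" for v
  proof -
    have "J x v = v"
      using v P_id linear_0[OF adjoint_linear[OF lA]] by (simp add: J_def A_def)
    then show ?thesis
      using g'[of 0] V(2) gx \<phi>x by (metis bij_is_inj inv_f_f)
  qed
  have "0 \<in> V" "g 0 = x" using V(2) gx by (simp_all add: \<phi>x)
  then show ?thesis by (rule that[OF V(1) _ _ gU dg ker g'0])
qed

lemma kernel_subset_tangent_space:
  fixes h :: "'a::euclidean_space \<Rightarrow> 'b::euclidean_space"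
  assumes U: "open U" "x \<in> U" and MU: "M \<inter> U = {p\<in>U. h p = 0}" and xM: "x \<in> M"
    and dh: "\<And>p. p \<in> U \<Longrightarrow> (h has_derivative Dh p) (at p)"
    and cont: "\<And>v. continuous_on U (\<lambda>p. Dh p v)"
    and rank: "\<And>p. p \<in> U \<Longrightarrow> dim (range (Dh p)) = k"
    and v: "Dh x v = 0"
  shows "v \<in> tangent_space M x"
proof -
  have hx: "h x = 0" using xM U(2) MU by blast
  obtain V :: "'a set" and g :: "'a \<Rightarrow> 'a" and g' :: "'a \<Rightarrow> 'a \<Rightarrow> 'a"
    where V: "open V" "0 \<in> V" and g0: "g 0 = x" and gU: "\<And>q. q \<in> V \<Longrightarrow> g q \<in> U"
    and dg: "\<And>q. q \<in> V \<Longrightarrow> (g has_derivative g' q) (at q)"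
    and ker: "\<And>q w. q \<in> V \<Longrightarrow> Dh x w = 0 \<Longrightarrow> Dh (g q) (g' q w) = 0"
    and g'0: "\<And>w. Dh x w = 0 \<Longrightarrow> g' 0 w = w"
    using constant_rank_local_inverse[OF U hx dh cont rank] by metis
  have "open ((\<lambda>t. t *\<^sub>R v) -` V)"
    by (rule continuous_open_vimage[OF V(1)]) (intro continuous_intros)
  moreover have "0 \<in> (\<lambda>t. t *\<^sub>R v) -` V" using V(2) by simp
  ultimately obtain \<rho> where \<rho>: "\<rho> > 0" "ball 0 \<rho> \<subseteq> (\<lambda>t. t *\<^sub>R v) -` V"
    using open_contains_ball by blast
  have curve_deriv: "((\<lambda>t. g (t *\<^sub>R v)) has_derivative (\<lambda>s. s *\<^sub>R g' (t *\<^sub>R v) v)) (at t)"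
    if "t \<in> ball 0 \<rho>" for t :: real
  proof -
    have q: "t *\<^sub>R v \<in> V" using \<rho>(2) that by blast
    have "((\<lambda>t. t *\<^sub>R v) has_derivative (\<lambda>s. s *\<^sub>R v)) (at t)"
      by (auto intro!: derivative_eq_intros)
    from diff_chain_at[OF this dg[OF q]] show ?thesis
      using linear_scale[OF has_derivative_linear[OF dg[OF q]]] by (simp add: o_def)
  qed
  have h_curve: "((\<lambda>t. h (g (t *\<^sub>R v))) has_derivative (\<lambda>s. 0)) (at t within ball 0 \<rho>)"
    if "t \<in> ball 0 \<rho>" for t
  proof -
    have q: "t *\<^sub>R v \<in> V" using \<rho>(2) that by blast
    have "((\<lambda>t. h (g (t *\<^sub>R v))) has_derivative
        (\<lambda>s. Dh (g (t *\<^sub>R v)) (s *\<^sub>R g' (t *\<^sub>R v) v))) (at t)"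
      using diff_chain_at[OF curve_deriv[OF that] dh[OF gU[OF q]]] by (simp add: o_def)
    then show ?thesis
      using ker[OF q v] linear_scale[OF has_derivative_linear[OF dh[OF gU[OF q]]]]
      by (simp add: has_derivative_at_withinI)
  qed
  have "g (t *\<^sub>R v) \<in> M" if "\<bar>t\<bar> < \<rho>" for t
  proof -
    have "h (g (t *\<^sub>R v)) = h (g (0 *\<^sub>R v))"
      by (rule has_derivative_zero_unique[OF convex_ball h_curve]) (use that \<rho> in auto)
    moreover have "g (t *\<^sub>R v) \<in> U" using that \<rho>(2) gU by auto
    ultimately show ?thesis using g0 hx MU by auto
  qed
  moreover have "((\<lambda>t. g (t *\<^sub>R v)) has_vector_derivative v) (at 0)"
    using curve_deriv[of 0] \<rho>(1) g'0[OF v] by (simp add: has_vector_derivative_def)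
  ultimately have "curve_through M x v (\<lambda>t. g (t *\<^sub>R v))"
    unfolding curve_through_def using g0 \<rho>(1) by auto
  then show ?thesis unfolding tangent_space_def by blast
qed

lemma tangent_space_eq_kernel:
  assumes "embedded_submanifold M" "x \<in> M"
  obtains A :: "'a::euclidean_space \<Rightarrow> 'a" where "linear A" "tangent_space M x = {v. A v = 0}"
proof -
  obtain U and h :: "'a \<Rightarrow> 'a" and k where U: "open U" "x \<in> U" and "smooth_on U h"
    and rank: "\<And>p. p \<in> U \<Longrightarrow> dim (range (frechet_derivative h (at p))) = k"
    and MU: "M \<inter> U = {p\<in>U. h p = 0}"
    using assms unfolding embedded_submanifold_def by metis
  then have "Ck_on 1 U h" unfolding smooth_on_def by blast
  then have dh: "(h has_derivative frechet_derivative h (at p)) (at p)" if "p \<in> U" for p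
    using that frechet_derivative_works by auto
  from \<open>Ck_on 1 U h\<close> have cont: "continuous_on U (\<lambda>p. frechet_derivative h (at p) v)" for v
    by simp
  have "tangent_space M x = {v. frechet_derivative h (at x) v = 0}"
    using tangent_vector_in_kernel[OF U MU dh[OF U(2)]]
      kernel_subset_tangent_space[OF U MU assms(2) dh cont rank] by blast
  then show ?thesis by (rule that[OF has_derivative_linear[OF dh[OF U(2)]]])
qed

lemma subspace_tangent_space:
  assumes "embedded_submanifold M" "x \<in> M"
  shows "subspace (tangent_space M x)"
  using tangent_space_eq_kernel[OF assms] linear_subspace_kernel by metis

lemma riem_grad_eqI:
  assumes u: "u \<in> tangent_space M x"
    and deriv: "\<And>\<gamma> v. curve_through M x v \<gamma> \<Longrightarrow> ((g \<circ> \<gamma>) has_real_derivative (u \<bullet> v)) (at 0)"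
  shows "riem_grad M g x = u"
  unfolding riem_grad_def
proof (rule the_equality)
  fix u' assume u': "u' \<in> tangent_space M x \<and>
    (\<forall>\<gamma> v. curve_through M x v \<gamma> \<longrightarrow> ((g \<circ> \<gamma>) has_real_derivative u' \<bullet> v) (at 0))"
  have same: "u \<bullet> v = u' \<bullet> v" if v: "v \<in> tangent_space M x" for v
  proof -
    obtain \<gamma> where "curve_through M x v \<gamma>" using v unfolding tangent_space_def by blast
    then show ?thesis using deriv u' DERIV_unique by metis
  qed
  have "(u' - u) \<bullet> (u' - u) = 0"
    using same[OF u] same[of u'] u' by (simp add: inner_diff_left inner_diff_right inner_commute)
  then show "u' = u" by simp
qed (use u deriv in blast)

lemma egrad_eqI:
  fixes g :: "'a::euclidean_space \<Rightarrow> real"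
  assumes "(g has_derivative (\<lambda>h. u \<bullet> h)) (at y)"
  shows "egrad g y = u"
  unfolding egrad_def
proof (rule the_equality)
  fix u' assume "(g has_derivative (\<lambda>h. u' \<bullet> h)) (at y)"
  then have "(\<lambda>h. u' \<bullet> h) = (\<lambda>h. u \<bullet> h)" using assms has_derivative_unique by blast
  then have "(u' - u) \<bullet> (u' - u) = 0" by (metis inner_diff_left right_minus_eq)
  then show "u' = u" by simp
qed (rule assms)

lemma tangent_space_Times_UNIV_fst:
  assumes "\<eta> \<in> tangent_space (M \<times> (UNIV :: 'b::euclidean_space set)) (x, y)"
  shows "fst \<eta> \<in> tangent_space M x"
proof -
  obtain \<gamma> e where \<gamma>: "\<gamma> 0 = (x, y)" "e > 0" "\<And>t. \<bar>t\<bar> < e \<Longrightarrow> \<gamma> t \<in> M \<times> (UNIV :: 'b set)"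
    "(\<gamma> has_vector_derivative \<eta>) (at 0)"
    using assms unfolding tangent_space_def curve_through_def by blast
  have "((\<lambda>t. fst (\<gamma> t)) has_vector_derivative fst \<eta>) (at 0)"
    using has_derivative_fst[OF \<gamma>(4)[unfolded has_vector_derivative_def]]
    unfolding has_vector_derivative_def by simp
  then have "curve_through M x (fst \<eta>) (\<lambda>t. fst (\<gamma> t))"
    unfolding curve_through_def using \<gamma>(1-3) by (auto simp: mem_Times_iff)
  then show ?thesis unfolding tangent_space_def by blast
qed

lemma tangent_space_Times_UNIV_Pair:
  assumes "a \<in> tangent_space M x"
  shows "(a, b) \<in> tangent_space (M \<times> (UNIV :: 'b::euclidean_space set)) (x, y)"
proof -
  obtain \<gamma> e where \<gamma>: "\<gamma> 0 = x" "e > 0" "\<And>t. \<bar>t\<bar> < e \<Longrightarrow> \<gamma> t \<in> M"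
      "(\<gamma> has_vector_derivative a) (at 0)"
    using assms unfolding tangent_space_def curve_through_def by blast
  have "((\<lambda>t. y + t *\<^sub>R b) has_vector_derivative b) (at 0)"
    by (auto intro!: derivative_eq_intros)
  then have "curve_through (M \<times> (UNIV :: 'b set)) (x, y) (a, b) (\<lambda>t. (\<gamma> t, y + t *\<^sub>R b))"
    unfolding curve_through_def using \<gamma> has_vector_derivative_Pair[OF \<gamma>(4)] by auto
  then show ?thesis unfolding tangent_space_def by blast
qed

lemma differentiable_on_set_Times_UNIV_gradient:
  fixes f :: "'a::euclidean_space \<Rightarrow> 'b::euclidean_space \<Rightarrow> real"
  assumes f_diff: "differentiable_on_set (M \<times> UNIV) (\<lambda>z. f (fst z) (snd z))" and xM: "x \<in> M"
  obtains c :: "'a \<times> 'b" where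
    "\<And>\<gamma> \<eta>. curve_through (M \<times> UNIV) (x, y) \<eta> \<gamma> \<Longrightarrow>
        (((\<lambda>z. f (fst z) (snd z)) \<circ> \<gamma>) has_real_derivative c \<bullet> \<eta>) (at 0)"
    "(f x has_derivative (\<lambda>w. snd c \<bullet> w)) (at y)"
proof -
  let ?F = "\<lambda>z. f (fst z) (snd z)"
  obtain U G where U: "open U" "(x, y) \<in> U" and G: "\<forall>q\<in>U. G differentiable (at q)"
    and GF: "\<forall>q\<in>(M \<times> UNIV) \<inter> U. G q = ?F q"
    using f_diff xM unfolding differentiable_on_set_def by (metis mem_Times_iff UNIV_I fst_conv snd_conv)
  define D where "D = frechet_derivative G (at (x, y))"
  have dG: "(G has_derivative D) (at (x, y))"
    unfolding D_def using G U(2) frechet_derivative_works by blast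
  define c where "c = adjoint D 1"
  have D: "D \<eta> = c \<bullet> \<eta>" for \<eta>
    using adjoint_works[OF has_derivative_linear[OF dG], of \<eta> 1] by (simp add: c_def inner_commute)
  have "((?F \<circ> \<gamma>) has_real_derivative c \<bullet> \<eta>) (at 0)"
    if curve: "curve_through (M \<times> UNIV) (x, y) \<eta> \<gamma>" for \<gamma> \<eta>
  proof -
    obtain e where \<gamma>: "\<gamma> 0 = (x, y)" "e > 0" "\<And>t. \<bar>t\<bar> < e \<Longrightarrow> \<gamma> t \<in> M \<times> UNIV"
      "(\<gamma> has_vector_derivative \<eta>) (at 0)"
      using curve unfolding curve_through_def by blast
    obtain d where d: "d > 0" "\<And>t. \<bar>t\<bar> < d \<Longrightarrow> \<gamma> t \<in> U"
      using curve_stays_in_open[OF \<gamma>(4) U(1)] \<gamma>(1) U(2) by metis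
    have "((G \<circ> \<gamma>) has_derivative (\<lambda>s. s * (c \<bullet> \<eta>))) (at 0)"
      using diff_chain_at[OF \<gamma>(4)[unfolded has_vector_derivative_def], of G D] dG \<gamma>(1)
      by (simp add: o_def D)
    then have "((?F \<circ> \<gamma>) has_derivative (\<lambda>s. s * (c \<bullet> \<eta>))) (at 0)"
    proof (rule has_derivative_transform_within_open[where s="ball 0 (min d e)"])
      fix t :: real assume "t \<in> ball 0 (min d e)"
      then show "(G \<circ> \<gamma>) t = (?F \<circ> \<gamma>) t" using d(2)[of t] \<gamma>(3)[of t] GF by auto
    qed (use d \<gamma> in auto)
    then show ?thesis
      unfolding has_field_derivative_def by (rule has_derivative_eq_rhs) (simp add: fun_eq_iff)
  qed
  moreover have "(f x has_derivative (\<lambda>w. snd c \<bullet> w)) (at y)"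
  proof -
    obtain \<epsilon> where \<epsilon>: "\<epsilon> > 0" "ball (x, y) \<epsilon> \<subseteq> U" using U open_contains_ball by blast
    have "((\<lambda>w. (x, w)) has_derivative (\<lambda>w. (0, w))) (at y)"
      by (auto intro!: derivative_eq_intros)
    from diff_chain_at[OF this, of G D] dG
    have "((\<lambda>w. G (x, w)) has_derivative (\<lambda>w. snd c \<bullet> w)) (at y)"
      by (simp add: o_def D inner_Pair_0)
    then show ?thesis
    proof (rule has_derivative_transform_within_open[where s="ball y \<epsilon>"])
      fix w assume "w \<in> ball y \<epsilon>"
      then have "(x, w) \<in> U" using \<epsilon>(2) by (auto simp: dist_Pair_Pair dist_commute)
      then show "G (x, w) = f x w" using GF xM by auto
    qed (use \<epsilon> in auto)
  qed
  ultimately show ?thesis by (rule that)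
qed

lemma has_derivative_egrad_of_differentiable_on_set:
  fixes f :: "'a::euclidean_space \<Rightarrow> 'b::euclidean_space \<Rightarrow> real"
  assumes "differentiable_on_set (M \<times> UNIV) (\<lambda>z. f (fst z) (snd z))" "x \<in> M"
  shows "(f x has_derivative (\<lambda>w. egrad (f x) y \<bullet> w)) (at y)"
proof -
  obtain c :: "'a \<times> 'b" where "(f x has_derivative (\<lambda>w. snd c \<bullet> w)) (at y)"
    using differentiable_on_set_Times_UNIV_gradient[OF assms] by blast
  with egrad_eqI[OF this] show ?thesis by simp
qed

lemma riem_grad_Times_UNIV:
  fixes f :: "'a::euclidean_space \<Rightarrow> 'b::euclidean_space \<Rightarrow> real"
  assumes M: "embedded_submanifold M"
    and f_diff: "differentiable_on_set (M \<times> UNIV) (\<lambda>z. f (fst z) (snd z))" and xM: "x \<in> M"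
  shows "riem_grad (M \<times> UNIV) (\<lambda>z. f (fst z) (snd z)) (x, y)
           = (riem_grad M (\<lambda>x. f x y) x, egrad (f x) y)"
proof -
  let ?F = "\<lambda>z. f (fst z) (snd z)"
  obtain c :: "'a \<times> 'b"
    where curve: "\<And>\<gamma> \<eta>. curve_through (M \<times> UNIV) (x, y) \<eta> \<gamma> \<Longrightarrow>
        ((?F \<circ> \<gamma>) has_real_derivative c \<bullet> \<eta>) (at 0)"
    and fx: "(f x has_derivative (\<lambda>w. snd c \<bullet> w)) (at y)"
    using differentiable_on_set_Times_UNIV_gradient[OF f_diff xM] by metis
  have span_T: "span (tangent_space M x) = tangent_space M x"
    using subspace_tangent_space[OF M xM] by (simp add: span_eq_iff)
  \<comment> \<open>fst c need not be tangent to M; its tangential part is the Riemannian gradient.\<close>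
  obtain u n where u: "u \<in> tangent_space M x" and n: "\<And>v. v \<in> tangent_space M x \<Longrightarrow> orthogonal n v"
    and c: "fst c = u + n"
    using orthogonal_subspace_decomp_exists[of "tangent_space M x" "fst c"] span_T by metis
  have fst_c: "fst c \<bullet> v = u \<bullet> v" if "v \<in> tangent_space M x" for v
    using n[OF that] by (simp add: c orthogonal_def inner_add_left)
  have "riem_grad M (\<lambda>x. f x y) x = u"
  proof (rule riem_grad_eqI[OF u])
    fix \<gamma> v assume \<gamma>: "curve_through M x v \<gamma>"
    then have "v \<in> tangent_space M x" unfolding tangent_space_def by blast
    then have "c \<bullet> (v, 0) = u \<bullet> v" using fst_c by (cases c) (simp add: inner_Pair)
    moreover have "curve_through (M \<times> UNIV) (x, y) (v, 0) (\<lambda>t. (\<gamma> t, y))"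
      using \<gamma> unfolding curve_through_def by (auto intro: has_vector_derivative_Pair)
    then have "((?F \<circ> (\<lambda>t. (\<gamma> t, y))) has_real_derivative c \<bullet> (v, 0)) (at 0)" by (rule curve)
    moreover have "?F \<circ> (\<lambda>t. (\<gamma> t, y)) = (\<lambda>x. f x y) \<circ> \<gamma>" by (simp add: o_def)
    ultimately show "(((\<lambda>x. f x y) \<circ> \<gamma>) has_real_derivative u \<bullet> v) (at 0)" by simp
  qed
  moreover have "egrad (f x) y = snd c" using egrad_eqI[OF fx] .
  moreover have "riem_grad (M \<times> UNIV) ?F (x, y) = (u, snd c)"
  proof (rule riem_grad_eqI[OF tangent_space_Times_UNIV_Pair[OF u]])
    fix \<gamma> \<eta> assume \<gamma>: "curve_through (M \<times> UNIV) (x, y) \<eta> \<gamma>"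
    then have "fst \<eta> \<in> tangent_space M x"
      using tangent_space_Times_UNIV_fst unfolding tangent_space_def by blast
    then have "c \<bullet> \<eta> = (u, snd c) \<bullet> \<eta>"
      using fst_c by (cases c, cases \<eta>) (simp add: inner_Pair)
    then show "((?F \<circ> \<gamma>) has_real_derivative (u, snd c) \<bullet> \<eta>) (at 0)" using curve[OF \<gamma>] by simp
  qed
  ultimately show ?thesis by simp
qed

lemma grad_lipschitz_retraction_prod_retrI:
  fixes f :: "'a::euclidean_space \<Rightarrow> 'b::euclidean_space \<Rightarrow> real"
  assumes M: "embedded_submanifold M"
    and f_diff: "differentiable_on_set (M \<times> UNIV) (\<lambda>z. f (fst z) (snd z))"
    and bound: "\<And>x y ex ey. x \<in> M \<Longrightarrow> ex \<in> tangent_space M x \<Longrightarrow>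
      f (R x ex) (y + ey) \<le> f x y + riem_grad M (\<lambda>x. f x y) x \<bullet> ex + egrad (f x) y \<bullet> ey
        + L / 2 * ((norm ex)\<^sup>2 + (norm ey)\<^sup>2)"
  shows "grad_lipschitz_retraction (M \<times> UNIV) (\<lambda>z. f (fst z) (snd z)) (prod_retr R) L"
  unfolding grad_lipschitz_retraction_def
proof (intro ballI)
  let ?F = "\<lambda>z. f (fst z) (snd z)"
  fix z \<eta> :: "'a \<times> 'b"
  assume z: "z \<in> M \<times> UNIV" and \<eta>: "\<eta> \<in> tangent_space (M \<times> UNIV) z"
  obtain x y ex ey where z\<eta>: "z = (x, y)" "\<eta> = (ex, ey)" by (cases z, cases \<eta>)
  have xM: "x \<in> M" and ex: "ex \<in> tangent_space M x"
    using z \<eta> tangent_space_Times_UNIV_fst[of \<eta> M x y] by (auto simp: z\<eta>)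
  show "?F (prod_retr R z \<eta>) \<le> ?F z + riem_grad (M \<times> UNIV) ?F z \<bullet> \<eta> + L / 2 * (norm \<eta>)\<^sup>2"
    using bound[OF xM ex, of y ey] riem_grad_Times_UNIV[OF M f_diff xM, of y]
    by (simp add: z\<eta> prod_retr_def inner_Pair norm_Pair)
qed

lemma lipschitz_gradient_quadratic_upper_bound:
  fixes \<phi> :: "'a::real_inner \<Rightarrow> real"
  assumes deriv: "\<And>y. (\<phi> has_derivative (\<lambda>h. g y \<bullet> h)) (at y)"
    and lipschitz: "\<And>y1 y2. norm (g y1 - g y2) \<le> L * norm (y1 - y2)"
  shows "\<phi> (y + \<eta>) \<le> \<phi> y + g y \<bullet> \<eta> + L / 2 * (norm \<eta>)\<^sup>2"
proof -
  define \<psi> where "\<psi> t = \<phi> (y + t *\<^sub>R \<eta>) - t * (g y \<bullet> \<eta>) - L / 2 * t\<^sup>2 * (norm \<eta>)\<^sup>2" for t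
  have deriv_\<psi>: "DERIV \<psi> t :> g (y + t *\<^sub>R \<eta>) \<bullet> \<eta> - g y \<bullet> \<eta> - L * t * (norm \<eta>)\<^sup>2" for t
  proof -
    have "((\<lambda>t. y + t *\<^sub>R \<eta>) has_derivative (\<lambda>s. s *\<^sub>R \<eta>)) (at t)"
      by (auto intro!: derivative_eq_intros)
    from diff_chain_at[OF this deriv]
    have "((\<lambda>t. \<phi> (y + t *\<^sub>R \<eta>)) has_derivative (\<lambda>s. g (y + t *\<^sub>R \<eta>) \<bullet> (s *\<^sub>R \<eta>))) (at t)"
      by (simp add: o_def)
    then have \<phi>': "((\<lambda>t. \<phi> (y + t *\<^sub>R \<eta>)) has_real_derivative g (y + t *\<^sub>R \<eta>) \<bullet> \<eta>) (at t)"
      unfolding has_field_derivative_def by (rule has_derivative_eq_rhs) (simp add: fun_eq_iff)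
    show ?thesis unfolding \<psi>_def by (rule derivative_eq_intros \<phi>' | simp)+
  qed
  have deriv_nonpos: "g (y + t *\<^sub>R \<eta>) \<bullet> \<eta> - g y \<bullet> \<eta> - L * t * (norm \<eta>)\<^sup>2 \<le> 0"
    if "0 \<le> t" for t
  proof -
    have "g (y + t *\<^sub>R \<eta>) \<bullet> \<eta> - g y \<bullet> \<eta> = (g (y + t *\<^sub>R \<eta>) - g y) \<bullet> \<eta>"
      by (simp add: inner_diff_left)
    also have "\<dots> \<le> norm (g (y + t *\<^sub>R \<eta>) - g y) * norm \<eta>"
      by (rule norm_cauchy_schwarz)
    also have "\<dots> \<le> L * norm (t *\<^sub>R \<eta>) * norm \<eta>"
      using lipschitz[of "y + t *\<^sub>R \<eta>" y] by (simp add: mult_right_mono)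
    also have "\<dots> = L * t * (norm \<eta>)\<^sup>2" using that by (simp add: power2_eq_square)
    finally show ?thesis by simp
  qed
  have "\<psi> 1 \<le> \<psi> 0"
  proof (rule DERIV_nonpos_imp_nonincreasing[of 0 1])
    fix t :: real assume "0 \<le> t" "t \<le> 1"
    then show "\<exists>d. DERIV \<psi> t :> d \<and> d \<le> 0" using deriv_\<psi> deriv_nonpos by blast
  qed simp
  then show ?thesis unfolding \<psi>_def by simp
qed

lemma inner_le_of_norm_diff_le:
  fixes a b e :: "'a::real_inner"
  assumes "norm (a - b) \<le> d"
  shows "a \<bullet> e \<le> b \<bullet> e + d * norm e"
proof -
  have "a \<bullet> e - b \<bullet> e \<le> norm (a - b) * norm e"
    unfolding inner_diff_left[symmetric] by (rule norm_cauchy_schwarz)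
  also have "\<dots> \<le> d * norm e" using assms by (rule mult_right_mono) simp
  finally show ?thesis by simp
qed

lemma quadratic_bound_with_cross_term:
  fixes a b c Lx Ly :: real
  assumes "c \<ge> 0"
  shows "Lx / 2 * a\<^sup>2 + Ly / 2 * b\<^sup>2 + c * a * b \<le> (c + max Lx Ly) / 2 * (a\<^sup>2 + b\<^sup>2)"
proof -
  have "2 * (c * a * b) \<le> c * (a\<^sup>2 + b\<^sup>2)"
    using mult_left_mono[OF sum_squares_bound[of a b] assms] by (simp add: algebra_simps)
  moreover have "Lx * a\<^sup>2 \<le> max Lx Ly * a\<^sup>2" "Ly * b\<^sup>2 \<le> max Lx Ly * b\<^sup>2"
    by (simp_all add: mult_right_mono)
  ultimately show ?thesis by (simp add: field_simps)
qed

theorem lemma7: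
  fixes M :: "'a::euclidean_space set"
    and f :: "'a \<Rightarrow> real^'n \<Rightarrow> real"
    and R :: "'a \<Rightarrow> 'a \<Rightarrow> 'a"
    and L_y L_x L_xy L_1 :: real
  assumes M: "embedded_submanifold M"
    and f_diff: "differentiable_on_set (M \<times> UNIV) (\<lambda>z. f (fst z) (snd z))"
    and R: "retraction M R"
    and i: "L_y \<ge> 0"
      "\<forall>x\<in>M. \<forall>y1 y2. norm (egrad (f x) y1 - egrad (f x) y2) \<le> L_y * norm (y1 - y2)"
    and ii: "L_x \<ge> 1" "\<forall>y. grad_lipschitz_retraction M (\<lambda>x. f x y) R L_x"
    and iii: "L_xy \<ge> 0"
      "\<forall>x1\<in>M. \<forall>x2\<in>M. \<forall>y. norm (egrad (f x1) y - egrad (f x2) y) \<le> L_xy * norm (x1 - x2)"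
    and iv: "inj_radius M > 0" "L_1 > 0"
      "\<forall>x\<in>M. \<forall>v\<in>tangent_space M x. norm (R x v - x) \<le> L_1 * norm v"
  shows "grad_lipschitz_retraction (M \<times> UNIV) (\<lambda>z. f (fst z) (snd z)) (prod_retr R)
           (L_xy * L_1 + max L_x L_y)"
proof (rule grad_lipschitz_retraction_prod_retrI[OF M f_diff])
  fix x y ex ey assume xM: "x \<in> M" and ex: "ex \<in> tangent_space M x"
  define x' where "x' = R x ex"
  have x'M: "x' \<in> M" using R xM ex unfolding retraction_def x'_def by blast
  have step_x: "f x' y \<le> f x y + riem_grad M (\<lambda>x. f x y) x \<bullet> ex + L_x / 2 * (norm ex)\<^sup>2"
    using ii(2) xM ex unfolding grad_lipschitz_retraction_def x'_def by blast
  have "(f x' has_derivative (\<lambda>w. egrad (f x') y' \<bullet> w)) (at y')" for y'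
    using has_derivative_egrad_of_differentiable_on_set[OF f_diff x'M] .
  then have step_y: "f x' (y + ey) \<le> f x' y + egrad (f x') y \<bullet> ey + L_y / 2 * (norm ey)\<^sup>2"
    by (rule lipschitz_gradient_quadratic_upper_bound) (use i(2) x'M in blast)
  have "norm (egrad (f x') y - egrad (f x) y) \<le> L_xy * norm (x' - x)"
    using iii(2) x'M xM by blast
  also have "\<dots> \<le> L_xy * L_1 * norm ex"
    using iv(3) xM ex mult_left_mono[OF _ iii(1)] unfolding x'_def by (metis mult.assoc)
  finally have cross: "egrad (f x') y \<bullet> ey \<le> egrad (f x) y \<bullet> ey + L_xy * L_1 * norm ex * norm ey"
    by (rule inner_le_of_norm_diff_le)
  have "L_x / 2 * (norm ex)\<^sup>2 + L_y / 2 * (norm ey)\<^sup>2 + L_xy * L_1 * norm ex * norm ey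
      \<le> (L_xy * L_1 + max L_x L_y) / 2 * ((norm ex)\<^sup>2 + (norm ey)\<^sup>2)"
    using quadratic_bound_with_cross_term[where c = "L_xy * L_1"] iii(1) iv(2) by simp
  then show "f (R x ex) (y + ey) \<le> f x y + riem_grad M (\<lambda>x. f x y) x \<bullet> ex + egrad (f x) y \<bullet> ey
      + (L_xy * L_1 + max L_x L_y) / 2 * ((norm ex)\<^sup>2 + (norm ey)\<^sup>2)"
    using step_x step_y cross unfolding x'_def by linarith
qed

end
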